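(* For integers $n \geq 3$ and $m \geq 1$, $$\chi_\rho(FSSD_m(C_n)) = \begin{cases} 3, & n \text{ even},\\ 4, & n \text{ odd}.\end{cases}$$
   Context: All graphs are finite and simple. $C_n$ is the cycle on $n$ vertices. For a positive integer $i$, an $i$-packing in a graph is a set of vertices any two distinct members of which are at distance greater than $i$. The packing chromatic number $\chi_\rho(H)$ is the smallest integer $k$ such that $V(H)$ can be partitioned into sets $V_1,\dots,V_k$ with each $V_i$ an $i$-packing. For a positive integer $m$, $FSSD_m(G)$ is obtained from $G$ by replacing each edge $uv$ of $G$ by a copy of $K_{2,m}$: the edge $uv$ is deleted and $m$ new vertices are added, each adjacent to exactly $u$ and $v$. *)

theory Defs
  imports Main "HOL-Library.Extended_Nat"
begin

type_synonym 'a graph = "'a set \<times> 'a set set"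

definition simple_graph :: "'a graph \<Rightarrow> bool" where
  "simple_graph G \<longleftrightarrow> finite (fst G) \<and>
     (\<forall>e\<in>snd G. \<exists>u v. e = {u, v} \<and> u \<noteq> v \<and> u \<in> fst G \<and> v \<in> fst G)"

definition adj :: "'a graph \<Rightarrow> 'a \<Rightarrow> 'a \<Rightarrow> bool" where
  "adj G u v \<longleftrightarrow> {u, v} \<in> snd G"

definition walk :: "'a graph \<Rightarrow> 'a list \<Rightarrow> bool" where
  "walk G xs \<longleftrightarrow> xs \<noteq> [] \<and> set xs \<subseteq> fst G \<and>
     (\<forall>j. Suc j < length xs \<longrightarrow> adj G (xs ! j) (xs ! Suc j))"

text \<open>Graph distance (infinite if no walk exists).\<close>
definition gdist :: "'a graph \<Rightarrow> 'a \<Rightarrow> 'a \<Rightarrow> enat" where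
  "gdist G u v = Inf {enat (length xs - 1) | xs. walk G xs \<and> hd xs = u \<and> last xs = v}"

definition packing :: "'a graph \<Rightarrow> nat \<Rightarrow> 'a set \<Rightarrow> bool" where
  "packing G i S \<longleftrightarrow> S \<subseteq> fst G \<and>
     (\<forall>u\<in>S. \<forall>v\<in>S. u \<noteq> v \<longrightarrow> gdist G u v > enat i)"

text \<open>V can be partitioned into V_1, ..., V_k with V_i an i-packing
  (empty classes allowed), expressed by the colouring c with V_i = c^{-1}(i).\<close>
definition packing_colorable :: "'a graph \<Rightarrow> nat \<Rightarrow> bool" where
  "packing_colorable G k \<longleftrightarrow> (\<exists>c :: 'a \<Rightarrow> nat.
     (\<forall>v\<in>fst G. c v \<in> {1..k}) \<and>
     (\<forall>i\<in>{1..k}. packing G i {v \<in> fst G. c v = i}))"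

definition packing_chromatic_number :: "'a graph \<Rightarrow> nat" where
  "packing_chromatic_number G = (LEAST k. packing_colorable G k)"

definition cycle_graph :: "nat \<Rightarrow> nat graph" where
  "cycle_graph n = ({0..<n}, {{i, (i + 1) mod n} | i. i < n})"

text \<open>FSSD_m(G): each edge uv is deleted and m new vertices (e, j), j < m, are added,
  each adjacent exactly to u and v.  Original vertices are tagged Inl.\<close>
definition FSSD :: "nat \<Rightarrow> 'a graph \<Rightarrow> ('a + ('a set \<times> nat)) graph" where
  "FSSD m G = (Inl ` fst G \<union> {Inr (e, j) | e j. e \<in> snd G \<and> j < m},
     {{Inl u, Inr (e, j)} | u e j. e \<in> snd G \<and> j < m \<and> u \<in> e})"

end

theory Submission
  imports Defs
begin

(* Color every subdivision vertex of FSSD_m(C_n) with 1: they are pairwise at distance 2.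
   Two original vertices are at distance 2 if adjacent in C_n and at distance at least 4
   otherwise, so coloring C_n properly with 2 and 3 (plus a single 4 if n is odd) gives a
   packing coloring with 3 resp. 4 colors.
   Conversely, going around C_n through one subdivision vertex per edge is a closed walk of
   length 2n along which positions d apart are at distance at most d, so a packing coloring
   restricts to a 2n-periodic packing coloring of the ray N.  Such a coloring needs the
   color 3, and if it uses only 1, 2, 3 then from some point on every other position is
   colored 1 and the others alternate between 2 and 3; periodicity then forces 4 | 2n. *)

lemma walk_singleton [simp]: "walk G [x] \<longleftrightarrow> x \<in> fst G"
  by (simp add: walk_def)

lemma walk_Cons_Cons [simp]:
  "walk G (x # y # xs) \<longleftrightarrow> x \<in> fst G \<and> adj G x y \<and> walk G (y # xs)"
  by (auto simp: walk_def nth_Cons split: nat.splits)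

lemma walk_Nil [simp]: "\<not> walk G []"
  by (simp add: walk_def)

lemma gdist_le_walk:
  assumes "walk G xs" "hd xs = u" "last xs = v"
  shows "gdist G u v \<le> enat (length xs - 1)"
  unfolding gdist_def using assms by (intro Inf_lower) blast

lemma less_gdistI:
  assumes "\<And>xs. walk G xs \<Longrightarrow> hd xs = u \<Longrightarrow> last xs = v \<Longrightarrow> d < length xs - 1"
  shows "enat d < gdist G u v"
proof -
  have "enat (Suc d) \<le> gdist G u v"
    unfolding gdist_def by (rule Inf_greatest) (auto dest!: assms)
  then show ?thesis
    by (simp add: Suc_ile_eq)
qed

lemma gdist_along_walk:
  assumes "\<And>k. w k \<in> fst G" and "\<And>k. adj G (w k) (w (Suc k))"
  shows "gdist G (w p) (w (p + d)) \<le> enat d"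
proof -
  define xs where "xs = map (\<lambda>i. w (p + i)) [0..<Suc d]"
  have "walk G xs"
    using assms by (auto simp: walk_def xs_def nth_append simp del: upt_Suc)
  moreover have "hd xs = w p" "last xs = w (p + d)" "length xs - 1 = d"
    by (simp_all add: xs_def hd_map last_map del: upt_Suc)
  ultimately show ?thesis
    by (metis gdist_le_walk)
qed

lemma not_adj_FSSD_Inl_Inl [simp]: "\<not> adj (FSSD m G) (Inl a) (Inl b)"
  by (auto simp: adj_def FSSD_def doubleton_eq_iff)

lemma not_adj_FSSD_Inr_Inr [simp]: "\<not> adj (FSSD m G) (Inr p) (Inr q)"
  by (auto simp: adj_def FSSD_def doubleton_eq_iff)

lemma adj_FSSD_Inl_Inr [simp]:
  "adj (FSSD m G) (Inl a) (Inr p) \<longleftrightarrow> fst p \<in> snd G \<and> snd p < m \<and> a \<in> fst p"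
  by (cases p) (auto simp: adj_def FSSD_def doubleton_eq_iff)

lemma adj_FSSD_Inr_Inl [simp]:
  "adj (FSSD m G) (Inr p) (Inl a) \<longleftrightarrow> fst p \<in> snd G \<and> snd p < m \<and> a \<in> fst p"
  by (cases p) (auto simp: adj_def FSSD_def doubleton_eq_iff)

lemma less_gdist_FSSD_Inr_Inr:
  assumes "p \<noteq> q"
  shows "enat 1 < gdist (FSSD m G) (Inr p) (Inr q)"
proof (rule less_gdistI)
  fix xs assume "walk (FSSD m G) xs" "hd xs = Inr p" "last xs = Inr q"
  then show "1 < length xs - 1"
    using assms by (cases xs rule: remdups_adj.cases) auto
qed

lemma walk_FSSD_Inl_Inl_short:
  assumes "walk (FSSD m G) (Inl a # xs)" "last (Inl a # xs) = Inl b" "length xs \<le> 3"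
  shows "a = b \<or> (\<exists>e\<in>snd G. a \<in> e \<and> b \<in> e)"
  using assms
proof (cases xs rule: remdups_adj.cases)
  case (3 y z zs)
  then show ?thesis
    using assms by (cases y; cases z; cases zs) auto
qed auto

lemma less_gdist_FSSD_Inl_Inl:
  assumes "a \<noteq> b" and "\<forall>e\<in>snd G. a \<in> e \<longrightarrow> b \<notin> e"
  shows "enat 3 < gdist (FSSD m G) (Inl a) (Inl b)"
proof (rule less_gdistI)
  fix xs assume walk: "walk (FSSD m G) xs" and ends: "hd xs = Inl a" "last xs = Inl b"
  then have "xs = Inl a # tl xs"
    by (cases xs) auto
  then show "3 < length xs - 1"
    using walk_FSSD_Inl_Inl_short[of m G a "tl xs" b] walk ends assms by force
qed

lemma packing_colorable_FSSD:
  fixes col :: "'a \<Rightarrow> nat"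
  assumes "1 \<le> K"
    and colors: "\<forall>a\<in>fst G. col a \<in> {2..K}"
    and proper: "\<forall>e\<in>snd G. \<forall>a\<in>e. \<forall>b\<in>e. a \<noteq> b \<longrightarrow> col a \<noteq> col b"
    and large_unique: "\<forall>a\<in>fst G. \<forall>b\<in>fst G. a \<noteq> b \<longrightarrow> col a = col b \<longrightarrow> col a \<le> 3"
  shows "packing_colorable (FSSD m G) K"
proof -
  define c :: "'a + 'a set \<times> nat \<Rightarrow> nat" where "c = case_sum col (\<lambda>_. 1)"
  have "packing (FSSD m G) i {v \<in> fst (FSSD m G). c v = i}" for i
    unfolding packing_def
  proof (intro conjI ballI impI)
    fix u v
    assume u: "u \<in> {v \<in> fst (FSSD m G). c v = i}" and v: "v \<in> {v \<in> fst (FSSD m G). c v = i}"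
      and "u \<noteq> v"
    show "enat i < gdist (FSSD m G) u v"
    proof (cases u; cases v)
      fix a b assume "u = Inl a" "v = Inl b"
      then have "a \<in> fst G" "b \<in> fst G" "a \<noteq> b" "col a = i" "col b = i"
        using u v \<open>u \<noteq> v\<close> by (auto simp: c_def FSSD_def)
      then have "i \<le> 3" and no_edge: "\<forall>e\<in>snd G. a \<in> e \<longrightarrow> b \<notin> e"
        using large_unique proper by metis+
      from \<open>a \<noteq> b\<close> no_edge have "enat 3 < gdist (FSSD m G) u v"
        unfolding \<open>u = Inl a\<close> \<open>v = Inl b\<close> by (rule less_gdist_FSSD_Inl_Inl)
      with \<open>i \<le> 3\<close> show ?thesis
        by (metis enat_ord_simps(1) le_less_trans)
    next
      fix p q assume "u = Inr p" "v = Inr q"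
      then show ?thesis
        using u v \<open>u \<noteq> v\<close> less_gdist_FSSD_Inr_Inr[of p q m G] by (auto simp: c_def)
    qed (use u v colors in \<open>auto simp: c_def FSSD_def\<close>)
  qed auto
  moreover have "\<forall>v\<in>fst (FSSD m G). c v \<in> {1..K}"
    using assms(1) colors by (auto simp: c_def FSSD_def)
  ultimately show ?thesis
    unfolding packing_colorable_def by blast
qed

(* Packing colorings of the one-way infinite path on N, where p and p + d are at distance d. *)
definition ray_packing_coloring :: "(nat \<Rightarrow> nat) \<Rightarrow> bool" where
  "ray_packing_coloring z \<longleftrightarrow> (\<forall>p d. 0 < d \<longrightarrow> d \<le> z p \<longrightarrow> z (p + d) \<noteq> z p)"

lemma ray_packing_coloringD:
  "ray_packing_coloring z \<Longrightarrow> 0 < d \<Longrightarrow> d \<le> z p \<Longrightarrow> z (p + d) \<noteq> z p"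
  by (simp add: ray_packing_coloring_def)

lemma ray_packing_coloring_uses_three_colors:
  assumes "ray_packing_coloring z"
  shows "\<exists>p. z p \<notin> {1, 2}"
proof (rule ccontr)
  assume "\<not> ?thesis"
  then have colors: "z p \<in> {1, 2}" for p
    by blast
  have alternate: "z (Suc p) \<noteq> z p" for p
    using ray_packing_coloringD[OF assms, of 1 p] colors[of p] by auto
  obtain p where "z p = 2"
    using alternate[of 0] colors[of 0] colors[of 1] by fastforce
  moreover have "z (p + 2) = z p"
    using alternate[of p] alternate[of "Suc p"] colors[of p] colors[of "Suc p"] colors[of "p + 2"]
    by auto
  ultimately show False
    using ray_packing_coloringD[OF assms, of 2 p] by simp
qed

lemma ray_packing_3coloring_ones_alternate:
  assumes "ray_packing_coloring z" and colors: "\<And>p. z p \<in> {1, 2, 3}" and "2 \<le> p"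
  shows "z (Suc p) = 1 \<longleftrightarrow> z p \<noteq> 1"
proof -
  have neq: "z (q + d) \<noteq> z q" if "0 < d" "d \<le> z q" for q d
    using ray_packing_coloringD[OF assms(1) that] .
  obtain j where p: "p = j + 2"
    using \<open>2 \<le> p\<close> le_Suc_ex by (metis add.commute)
  \<comment> \<open>A block 2, 3 admits no two valid colors before it, a block 3, 2 none after it.\<close>
  have "z (Suc p) = 1" if "z p \<noteq> 1"
  proof (rule ccontr)
    assume "z (Suc p) \<noteq> 1"
    then consider "z p = 2" "z (Suc p) = 3" | "z p = 3" "z (Suc p) = 2"
      using colors[of p] colors[of "Suc p"] neq[of 1 p] \<open>z p \<noteq> 1\<close> by fastforce
    then show False
    proof cases
      case 1
      then have "z (j + 1) = 1"
        using colors[of "j + 1"] neq[of 1 "j + 1"] neq[of 2 "j + 1"] unfolding p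
        by (auto simp: numeral_eq_Suc)
      then show False
        using 1 colors[of j] neq[of 1 j] neq[of 2 j] neq[of 3 j] unfolding p
        by (auto simp: numeral_eq_Suc)
    next
      case 2
      then have "z (p + 2) = 1"
        using colors[of "p + 2"] neq[of 1 "Suc p"] neq[of 2 p] by (auto simp: numeral_eq_Suc)
      then show False
        using 2 colors[of "p + 3"] neq[of 1 "p + 2"] neq[of 2 "Suc p"] neq[of 3 p]
        by (auto simp: numeral_eq_Suc)
    qed
  qed
  then show ?thesis
    using neq[of 1 p] by auto
qed

lemma periodic_ray_packing_3coloring:
  assumes "ray_packing_coloring z" and colors: "\<And>p. z p \<in> {1, 2, 3}"
    and period: "\<And>p. z (p + L) = z p"
  shows "4 dvd L"
proof -
  have ones: "z q = 1 \<longleftrightarrow> (z 2 = 1 \<longleftrightarrow> even q)" if "2 \<le> q" for q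
    using that
  proof (induction q rule: dec_induct)
    case (step q)
    then show ?case
      using ray_packing_3coloring_ones_alternate[OF assms(1) colors, of q] by auto
  qed simp
  have "even L"
    using ones[of "2 + L"] period[of 2] by auto
  define s :: nat where "s = (if z 2 = 1 then 3 else 2)"
  have large: "z (s + 2 * i) \<in> {2, 3}" for i
    using ones[of "s + 2 * i"] colors[of "s + 2 * i"] by (auto simp: s_def)
  have "z (s + 2 * i) = z s \<longleftrightarrow> even i" for i
  proof (induction i)
    case (Suc i)
    have "z (s + 2 * i + 2) \<noteq> z (s + 2 * i)"
      using ray_packing_coloringD[OF assms(1), of 2 "s + 2 * i"] large[of i] by auto
    then show ?case
      using Suc large[of i] large[of "Suc i"] large[of 0] by (auto simp: add.assoc)
  qed simp
  moreover have "z (s + 2 * (L div 2)) = z s"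
    using period[of s] \<open>even L\<close> by simp
  ultimately have "even (L div 2)"
    by blast
  with \<open>even L\<close> show ?thesis
    by presburger
qed

lemma ray_packing_coloring_along_walk:
  assumes colors: "\<forall>v\<in>fst G. c v \<in> {1..K}"
    and classes: "\<forall>i\<in>{1..K}. packing G i {v \<in> fst G. c v = i}"
    and walk: "\<And>k. w k \<in> fst G" "\<And>k. adj G (w k) (w (Suc k))"
    and distinct: "\<And>p d. 0 < d \<Longrightarrow> d \<le> K \<Longrightarrow> w (p + d) \<noteq> w p"
  shows "ray_packing_coloring (c \<circ> w)"
  unfolding ray_packing_coloring_def
proof (intro allI impI notI)
  fix p d assume "0 < d" "d \<le> (c \<circ> w) p" "(c \<circ> w) (p + d) = (c \<circ> w) p"
  moreover have "c (w p) \<in> {1..K}"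
    using colors walk(1) by blast
  ultimately have "enat (c (w p)) < gdist G (w p) (w (p + d))"
    using classes walk(1)[of p] walk(1)[of "p + d"] distinct[of d p]
    unfolding packing_def by fastforce
  also have "gdist G (w p) (w (p + d)) \<le> enat d"
    using walk by (rule gdist_along_walk)
  finally show False
    using \<open>d \<le> (c \<circ> w) p\<close> by simp
qed

lemma proper_coloring_cycle_graph:
  assumes "\<And>i. i < n \<Longrightarrow> col i \<noteq> col (Suc i mod n)"
  shows "\<forall>e\<in>snd (cycle_graph n). \<forall>a\<in>e. \<forall>b\<in>e. a \<noteq> b \<longrightarrow> col a \<noteq> col b"
  using assms by (fastforce simp: cycle_graph_def)

lemma packing_colorable_FSSD_even_cycle:
  assumes "even n"
  shows "packing_colorable (FSSD m (cycle_graph n)) 3"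
proof (rule packing_colorable_FSSD[where col = "\<lambda>a. if even a then 2 else 3"])
  show "\<forall>e\<in>snd (cycle_graph n). \<forall>a\<in>e. \<forall>b\<in>e. a \<noteq> b \<longrightarrow>
      (if even a then 2 else 3) \<noteq> (if even b then 2 else (3::nat))"
    by (rule proper_coloring_cycle_graph) (use assms in \<open>auto simp: mod_Suc\<close>)
qed (auto simp: cycle_graph_def)

lemma packing_colorable_FSSD_odd_cycle:
  assumes "odd n" "3 \<le> n"
  shows "packing_colorable (FSSD m (cycle_graph n)) 4"
proof (rule packing_colorable_FSSD[where col = "\<lambda>a. if a = 0 then 4 else if odd a then 2 else 3"])
  show "\<forall>e\<in>snd (cycle_graph n). \<forall>a\<in>e. \<forall>b\<in>e. a \<noteq> b \<longrightarrow>
      (if a = 0 then 4 else if odd a then 2 else 3) \<noteq> (if b = 0 then 4 else if odd b then 2 else (3::nat))"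
    by (rule proper_coloring_cycle_graph) (use assms in \<open>auto simp: mod_Suc\<close>)
qed (auto simp: cycle_graph_def)

definition cycle_edge :: "nat \<Rightarrow> nat \<Rightarrow> nat set" where
  "cycle_edge n i = {i, Suc i mod n}"

lemma cycle_edge_in_cycle_graph: "i < n \<Longrightarrow> cycle_edge n i \<in> snd (cycle_graph n)"
  by (auto simp: cycle_edge_def cycle_graph_def)

lemma cycle_edge_eqD:
  assumes "3 \<le> n" "i < n" "i' < n" "cycle_edge n i = cycle_edge n i'"
  shows "i = i'"
proof (rule ccontr)
  assume "i \<noteq> i'"
  with assms have "i = Suc i' mod n" "i' = Suc i mod n"
    by (auto simp: cycle_edge_def doubleton_eq_iff)
  then have "(i + 2) mod n = i mod n"
    using \<open>i < n\<close> by (simp add: mod_Suc_eq)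
  then have "n dvd 2"
    by (simp add: mod_eq_dvd_iff_nat)
  with \<open>3 \<le> n\<close> show False
    by (auto dest: dvd_imp_le)
qed

definition FSSD_cycle_walk :: "nat \<Rightarrow> nat \<Rightarrow> nat + nat set \<times> nat" where
  "FSSD_cycle_walk n k =
     (if even k then Inl (k div 2 mod n) else Inr (cycle_edge n (k div 2 mod n), 0))"

lemma FSSD_cycle_walk_in_FSSD:
  assumes "0 < n" "0 < m"
  shows "FSSD_cycle_walk n k \<in> fst (FSSD m (cycle_graph n))"
  using assms cycle_edge_in_cycle_graph[of "k div 2 mod n" n]
  by (auto simp: FSSD_cycle_walk_def FSSD_def cycle_graph_def)

lemma FSSD_cycle_walk_adj:
  assumes "0 < n" "0 < m"
  shows "adj (FSSD m (cycle_graph n)) (FSSD_cycle_walk n k) (FSSD_cycle_walk n (Suc k))"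
  using assms cycle_edge_in_cycle_graph[of "k div 2 mod n" n]
  by (auto simp: FSSD_cycle_walk_def cycle_edge_def mod_Suc_eq elim!: oddE)

lemma FSSD_cycle_walk_periodic: "FSSD_cycle_walk n (k + 2 * n) = FSSD_cycle_walk n k"
  by (simp add: FSSD_cycle_walk_def)

lemma FSSD_cycle_walk_eqD:
  assumes "3 \<le> n" "FSSD_cycle_walk n k = FSSD_cycle_walk n k'"
  shows "k mod (2 * n) = k' mod (2 * n)"
proof -
  have "k mod 2 = k' mod 2" "k div 2 mod n = k' div 2 mod n"
    using assms cycle_edge_eqD[of n "k div 2 mod n" "k' div 2 mod n"]
    by (auto simp: FSSD_cycle_walk_def mod2_eq_if split: if_splits)
  then show ?thesis
    by (simp add: mod_mult2_eq)
qed

lemma FSSD_cycle_walk_distinct: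
  assumes "3 \<le> n" "0 < d" "d < 2 * n"
  shows "FSSD_cycle_walk n (p + d) \<noteq> FSSD_cycle_walk n p"
proof
  assume "FSSD_cycle_walk n (p + d) = FSSD_cycle_walk n p"
  then have "2 * n dvd d"
    using FSSD_cycle_walk_eqD[OF assms(1)] by (metis mod_eq_dvd_iff_nat add_diff_cancel_left' le_add1)
  with assms show False
    by (auto dest: dvd_imp_le)
qed

lemma packing_colorable_FSSD_cycle_le_3:
  assumes "3 \<le> n" "1 \<le> m" "packing_colorable (FSSD m (cycle_graph n)) k" "k \<le> 3"
  shows "k = 3 \<and> even n"
proof -
  let ?G = "FSSD m (cycle_graph n)"
  obtain c where colors: "\<forall>v\<in>fst ?G. c v \<in> {1..k}"
    and classes: "\<forall>i\<in>{1..k}. packing ?G i {v \<in> fst ?G. c v = i}"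
    using assms(3) unfolding packing_colorable_def by blast
  define z where "z = c \<circ> FSSD_cycle_walk n"
  have ray: "ray_packing_coloring z"
    unfolding z_def using colors classes
  proof (rule ray_packing_coloring_along_walk)
    show "\<And>p d. 0 < d \<Longrightarrow> d \<le> k \<Longrightarrow> FSSD_cycle_walk n (p + d) \<noteq> FSSD_cycle_walk n p"
      using assms FSSD_cycle_walk_distinct by simp
  qed (use assms FSSD_cycle_walk_in_FSSD FSSD_cycle_walk_adj in auto)
  have z_colors: "z p \<in> {1..k}" for p
    using colors FSSD_cycle_walk_in_FSSD assms by (simp add: z_def)
  obtain p where "z p \<notin> {1, 2}"
    using ray_packing_coloring_uses_three_colors[OF ray] by blast
  then have "k = 3"
    using z_colors[of p] \<open>k \<le> 3\<close> by auto
  moreover have "z p \<in> {1, 2, 3}" for p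
    using z_colors[of p] \<open>k = 3\<close> by auto
  then have "4 dvd 2 * n"
    using periodic_ray_packing_3coloring[OF ray] by (simp add: z_def FSSD_cycle_walk_periodic)
  ultimately show ?thesis
    by presburger
qed

theorem proposition7:
  fixes n m :: nat
  assumes "n \<ge> 3" and "m \<ge> 1"
  shows "packing_chromatic_number (FSSD m (cycle_graph n)) = (if even n then 3 else 4)"
  unfolding packing_chromatic_number_def
proof (rule Least_equality)
  show "packing_colorable (FSSD m (cycle_graph n)) (if even n then 3 else 4)"
    using packing_colorable_FSSD_even_cycle packing_colorable_FSSD_odd_cycle assms by simp
  show "(if even n then 3 else 4) \<le> k" if "packing_colorable (FSSD m (cycle_graph n)) k" for k
    using packing_colorable_FSSD_cycle_le_3[OF assms that] by fastforce
qed

end
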